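(* Let $\mathbf{A}\in V(\mathsf{BCA})$. Put $O(\mathbf{A})=\{a\in A:J_2a=a\}$ and $D(\mathbf{A})=\{a\in A:J_2a=0\}$. For $a\in A$: (1) $a\in O(\mathbf{A})$ iff $a=J_2b$ for some $b\in A$; (2) $a\in D(\mathbf{A})$ iff $a=b\wedge\neg b$ for some $b\in A$. Moreover: (3) $O(\mathbf{A})$ is the universe of a subalgebra $\mathbf{O}(\mathbf{A})$ of $\mathbf{A}$ whose $\{\wedge,\vee,\neg,0,1\}$-reduct is a Boolean algebra; (4) $D(\mathbf{A})$ is the universe of a semilattice $\mathbf{D}(\mathbf{A})$ which is isomorphic to a quotient of $\mathbf{A}$. Here $D(\mathbf{A})$ contains $0$ and is closed under $\vee$ and $J_2$, and $\neg$ is set to be the identity on it.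
   Context: $\mathbf{WK}^e$ is the three-element algebra on $\{0,\tfrac12,1\}$ of type $\langle\wedge,\vee,\neg,J_2,0,1\rangle$. Its operations are: - $\neg$ swaps $0,1$ and fixes $\tfrac12$; - $\wedge,\vee$ are Boolean on $\{0,1\}$ and return $\tfrac12$ if some argument is $\tfrac12$; - $J_2(1)=1$ and $J_2(\tfrac12)=J_2(0)=0$. $\mathsf{BCA}=ISP(\mathbf{WK}^e)$ and $V(\mathsf{BCA})=HSP(\mathbf{WK}^e)$. A semilattice (in this type) is a member of $V(\mathsf{BCA})$ satisfying $\neg x\approx x$. Equivalently, its $\vee$ and $\wedge$ coincide, giving a join-semilattice with zero $0=1$, and $J_2$ is constantly $0$. *)

theory Defs
  imports Main
begin

datatype wk = W0 | Wh | W1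

fun wk_neg :: "wk \<Rightarrow> wk" where
  "wk_neg W0 = W1" | "wk_neg Wh = Wh" | "wk_neg W1 = W0"

definition wk_meet :: "wk \<Rightarrow> wk \<Rightarrow> wk" where
  "wk_meet x y = (if x = Wh \<or> y = Wh then Wh
                  else if x = W1 \<and> y = W1 then W1 else W0)"

definition wk_join :: "wk \<Rightarrow> wk \<Rightarrow> wk" where
  "wk_join x y = (if x = Wh \<or> y = Wh then Wh
                  else if x = W1 \<or> y = W1 then W1 else W0)"

fun wk_J2 :: "wk \<Rightarrow> wk" where
  "wk_J2 W1 = W1" | "wk_J2 Wh = W0" | "wk_J2 W0 = W0"

record 'a alg =
  car :: "'a set"
  meet :: "'a \<Rightarrow> 'a \<Rightarrow> 'a"
  join :: "'a \<Rightarrow> 'a \<Rightarrow> 'a"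
  neg :: "'a \<Rightarrow> 'a"
  jtwo :: "'a \<Rightarrow> 'a"
  zero_el :: 'a
  one_el :: 'a

definition subuniverse :: "'a set \<Rightarrow> 'a alg \<Rightarrow> bool" where
  "subuniverse B A \<longleftrightarrow> B \<subseteq> car A
     \<and> (\<forall>x\<in>B. \<forall>y\<in>B. meet A x y \<in> B \<and> join A x y \<in> B)
     \<and> (\<forall>x\<in>B. neg A x \<in> B \<and> jtwo A x \<in> B)
     \<and> zero_el A \<in> B \<and> one_el A \<in> B"

definition subalg :: "'a set \<Rightarrow> 'a alg \<Rightarrow> 'a alg" where
  "subalg B A = A\<lparr>car := B\<rparr>"

definition hom :: "('a \<Rightarrow> 'b) \<Rightarrow> 'a alg \<Rightarrow> 'b alg \<Rightarrow> bool" where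
  "hom f A B \<longleftrightarrow> (\<forall>x\<in>car A. f x \<in> car B)
     \<and> (\<forall>x\<in>car A. \<forall>y\<in>car A. f (meet A x y) = meet B (f x) (f y)
                              \<and> f (join A x y) = join B (f x) (f y))
     \<and> (\<forall>x\<in>car A. f (neg A x) = neg B (f x) \<and> f (jtwo A x) = jtwo B (f x))
     \<and> f (zero_el A) = zero_el B \<and> f (one_el A) = one_el B"

definition iso :: "('a \<Rightarrow> 'b) \<Rightarrow> 'a alg \<Rightarrow> 'b alg \<Rightarrow> bool" where
  "iso f A B \<longleftrightarrow> hom f A B \<and> bij_betw f (car A) (car B)"

definition wk_power :: "('i \<Rightarrow> wk) alg" where
  "wk_power = \<lparr> car = UNIV,
                meet = (\<lambda>f g i. wk_meet (f i) (g i)),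
                join = (\<lambda>f g i. wk_join (f i) (g i)),
                neg = (\<lambda>f i. wk_neg (f i)),
                jtwo = (\<lambda>f i. wk_J2 (f i)),
                zero_el = (\<lambda>i. W0),
                one_el = (\<lambda>i. W1) \<rparr>"

text \<open>Membership in V(BCA) = HSP(WK^e): A is a homomorphic image of a
  subalgebra of a power of WK^e (index type 'i).\<close>
definition in_VBCA :: "'i itself \<Rightarrow> 'a alg \<Rightarrow> bool" where
  "in_VBCA _ A \<longleftrightarrow> (\<exists>(S :: ('i \<Rightarrow> wk) set) (h :: ('i \<Rightarrow> wk) \<Rightarrow> 'a).
      subuniverse S wk_power \<and> hom h (subalg S wk_power) A \<and> h ` S = car A)"

definition is_semilattice :: "'i itself \<Rightarrow> 'a alg \<Rightarrow> bool" where
  "is_semilattice T A \<longleftrightarrow> in_VBCA T A \<and> (\<forall>x\<in>car A. neg A x = x)"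

definition boolean_alg :: "'a set \<Rightarrow> ('a \<Rightarrow> 'a \<Rightarrow> 'a) \<Rightarrow> ('a \<Rightarrow> 'a \<Rightarrow> 'a)
      \<Rightarrow> ('a \<Rightarrow> 'a) \<Rightarrow> 'a \<Rightarrow> 'a \<Rightarrow> bool" where
  "boolean_alg B m j n z u \<longleftrightarrow>
     (\<forall>x\<in>B. \<forall>y\<in>B. m x y \<in> B \<and> j x y \<in> B) \<and> (\<forall>x\<in>B. n x \<in> B) \<and> z \<in> B \<and> u \<in> B
   \<and> (\<forall>x\<in>B. \<forall>y\<in>B. m x y = m y x \<and> j x y = j y x)
   \<and> (\<forall>x\<in>B. \<forall>y\<in>B. \<forall>w\<in>B. m (m x y) w = m x (m y w) \<and> j (j x y) w = j x (j y w))
   \<and> (\<forall>x\<in>B. \<forall>y\<in>B. m x (j x y) = x \<and> j x (m x y) = x)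
   \<and> (\<forall>x\<in>B. \<forall>y\<in>B. \<forall>w\<in>B. m x (j y w) = j (m x y) (m x w))
   \<and> (\<forall>x\<in>B. j x z = x \<and> m x u = x)
   \<and> (\<forall>x\<in>B. m x (n x) = z \<and> j x (n x) = u)"

definition congruence :: "('a \<times> 'a) set \<Rightarrow> 'a alg \<Rightarrow> bool" where
  "congruence \<theta> A \<longleftrightarrow> equiv (car A) \<theta>
     \<and> (\<forall>x x' y y'. (x, x') \<in> \<theta> \<longrightarrow> (y, y') \<in> \<theta> \<longrightarrow>
          (meet A x y, meet A x' y') \<in> \<theta> \<and> (join A x y, join A x' y') \<in> \<theta>)
     \<and> (\<forall>x x'. (x, x') \<in> \<theta> \<longrightarrow> (neg A x, neg A x') \<in> \<theta> \<and> (jtwo A x, jtwo A x') \<in> \<theta>)"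

definition quot_alg :: "'a alg \<Rightarrow> ('a \<times> 'a) set \<Rightarrow> 'a set alg" where
  "quot_alg A \<theta> = \<lparr> car = car A // \<theta>,
      meet = (\<lambda>X Y. \<theta> `` {meet A (SOME x. x \<in> X) (SOME y. y \<in> Y)}),
      join = (\<lambda>X Y. \<theta> `` {join A (SOME x. x \<in> X) (SOME y. y \<in> Y)}),
      neg = (\<lambda>X. \<theta> `` {neg A (SOME x. x \<in> X)}),
      jtwo = (\<lambda>X. \<theta> `` {jtwo A (SOME x. x \<in> X)}),
      zero_el = \<theta> `` {zero_el A},
      one_el = \<theta> `` {one_el A} \<rparr>"

definition Oset :: "'a alg \<Rightarrow> 'a set" where
  "Oset A = {a \<in> car A. jtwo A a = a}"

definition Dset :: "'a alg \<Rightarrow> 'a set" where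
  "Dset A = {a \<in> car A. jtwo A a = zero_el A}"

text \<open>The semilattice D(A): join from A (meet coincides with join), neg is the
  identity, J2 from A, and both constants are 0.\<close>
definition D_alg :: "'a alg \<Rightarrow> 'a alg" where
  "D_alg A = \<lparr> car = Dset A, meet = join A, join = join A, neg = (\<lambda>x. x),
               jtwo = jtwo A, zero_el = zero_el A, one_el = zero_el A \<rparr>"

end

theory Submission
  imports Defs
begin

(* An algebra A in V(BCA) is a homomorphic image of a subalgebra of a power of WK^e, so every
   identity of WK^e, being checked coordinatewise, holds in A.  Such identities show that
   dproj a = a \<and> \<not>a is a homomorphism from A onto the semilattice D(A) which fixes D(A)
   pointwise, and that a = dproj a \<or> J2 a.  Hence D(A) is isomorphic to A modulo the kernel of
   dproj, and O(A) is the preimage of 0 under dproj, a subalgebra.  Absorption and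
   complementation hold in WK^e only up to a dproj-term, so they become exact on O(A), which is
   therefore Boolean. *)

lemma hom_comp:
  assumes "hom f A B" "hom g B C"
  shows "hom (g \<circ> f) A C"
  using assms unfolding hom_def by auto

lemma in_VBCA_hom_image:
  fixes T :: "'i itself"
  assumes "in_VBCA T A" "hom f A B" "f ` car A = car B"
  shows "in_VBCA T B"
proof -
  obtain S :: "('i \<Rightarrow> wk) set" and h
    where S: "subuniverse S wk_power" and h: "hom h (subalg S wk_power) A" and onto: "h ` S = car A"
    using assms(1) unfolding in_VBCA_def by blast
  have "hom (f \<circ> h) (subalg S wk_power) B"
    using h assms(2) by (rule hom_comp)
  moreover have "(f \<circ> h) ` S = car B"
    unfolding image_comp[symmetric] onto by (rule assms(3))
  ultimately show ?thesis
    unfolding in_VBCA_def using S by blast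
qed

lemma subuniverse_hom_image:
  assumes hom: "hom f A B" and closed: "subuniverse (car A) A"
  shows "subuniverse (f ` car A) B"
  unfolding subuniverse_def
proof (intro conjI ballI)
  show "f ` car A \<subseteq> car B" using hom by (auto simp: hom_def)
  show "zero_el B \<in> f ` car A" "one_el B \<in> f ` car A"
    using hom closed unfolding hom_def subuniverse_def by (metis image_eqI)+
next
  fix x y assume "x \<in> f ` car A" "y \<in> f ` car A"
  then obtain a b where "a \<in> car A" "b \<in> car A" "x = f a" "y = f b" by blast
  then show "meet B x y \<in> f ` car A" "join B x y \<in> f ` car A"
    using hom closed unfolding hom_def subuniverse_def by (metis image_eqI)+
next
  fix x assume "x \<in> f ` car A"
  then obtain a where "a \<in> car A" "x = f a" by blast
  then show "neg B x \<in> f ` car A" "jtwo B x \<in> f ` car A"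
    using hom closed unfolding hom_def subuniverse_def by (metis image_eqI)+
qed

lemma subuniverse_vimage:
  assumes hom: "hom f A B" and closed: "subuniverse (car A) A" and T: "subuniverse T B"
  shows "subuniverse {a \<in> car A. f a \<in> T} A"
  unfolding subuniverse_def
proof (intro conjI ballI)
  show "{a \<in> car A. f a \<in> T} \<subseteq> car A" by blast
  show "zero_el A \<in> {a \<in> car A. f a \<in> T}" "one_el A \<in> {a \<in> car A. f a \<in> T}"
    using hom closed T unfolding hom_def subuniverse_def by simp_all
next
  fix x y assume "x \<in> {a \<in> car A. f a \<in> T}" "y \<in> {a \<in> car A. f a \<in> T}"
  with hom closed T show "meet A x y \<in> {a \<in> car A. f a \<in> T}" "join A x y \<in> {a \<in> car A. f a \<in> T}"
    unfolding hom_def subuniverse_def by simp_all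
next
  fix x assume "x \<in> {a \<in> car A. f a \<in> T}"
  with hom closed T show "neg A x \<in> {a \<in> car A. f a \<in> T}" "jtwo A x \<in> {a \<in> car A. f a \<in> T}"
    unfolding hom_def subuniverse_def by simp_all
qed

definition ker_rel :: "('a \<Rightarrow> 'b) \<Rightarrow> 'a alg \<Rightarrow> ('a \<times> 'a) set" where
  "ker_rel f A = {(x, y). x \<in> car A \<and> y \<in> car A \<and> f x = f y}"

lemma equiv_ker_rel: "equiv (car A) (ker_rel f A)"
  unfolding ker_rel_def by (rule equivI) (auto simp: refl_on_def sym_def trans_def)

lemma congruence_ker_rel:
  assumes "hom f A B" "subuniverse (car A) A"
  shows "congruence (ker_rel f A) A"
  using assms equiv_ker_rel unfolding congruence_def ker_rel_def hom_def subuniverse_def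
  by auto

lemma ker_rel_class:
  "a \<in> car A \<Longrightarrow> ker_rel f A `` {a} = {x \<in> car A. f x = f a}"
  unfolding ker_rel_def by auto

lemma quotient_ker_rel:
  assumes onto: "f ` car A = car B"
  shows "car A // ker_rel f A = (\<lambda>b. {a \<in> car A. f a = b}) ` car B"
proof -
  have "car A // ker_rel f A = (\<lambda>a. ker_rel f A `` {a}) ` car A"
    by (auto simp: quotient_def)
  also have "\<dots> = (\<lambda>a. {x \<in> car A. f x = f a}) ` car A"
    by (rule image_cong[OF refl ker_rel_class])
  also have "\<dots> = (\<lambda>b. {a \<in> car A. f a = b}) ` car B"
    unfolding onto[symmetric] image_image ..
  finally show ?thesis .
qed

lemma iso_quot_alg_ker_rel:
  assumes hom: "hom f A B" and closed: "subuniverse (car A) A" and onto: "f ` car A = car B"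
  shows "iso (\<lambda>b. {a \<in> car A. f a = b}) B (quot_alg A (ker_rel f A))"
proof -
  let ?fib = "\<lambda>b. {a \<in> car A. f a = b}"
  let ?rep = "\<lambda>X. SOME x. x \<in> X"
  have rep: "?rep (?fib b) \<in> ?fib b" if "b \<in> car B" for b
    unfolding some_in_eq using that unfolding onto[symmetric] by auto
  have kernel_class: "ker_rel f A `` {a} = ?fib (f a)" if "a \<in> car A" for a
    using that by (rule ker_rel_class)
  have classes: "car A // ker_rel f A = ?fib ` car B"
    using onto by (rule quotient_ker_rel)
  have "hom ?fib B (quot_alg A (ker_rel f A))"
    unfolding hom_def quot_alg_def alg.simps
  proof (intro conjI ballI)
    fix b c assume b: "b \<in> car B" and c: "c \<in> car B"
    note rb = rep[OF b, simplified] and rc = rep[OF c, simplified]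
    show "?fib b \<in> car A // ker_rel f A" using b classes by blast
    show "?fib (meet B b c) = ker_rel f A `` {meet A (?rep (?fib b)) (?rep (?fib c))}"
      using hom closed rb rc by (simp add: kernel_class hom_def subuniverse_def)
    show "?fib (join B b c) = ker_rel f A `` {join A (?rep (?fib b)) (?rep (?fib c))}"
      using hom closed rb rc by (simp add: kernel_class hom_def subuniverse_def)
    show "?fib (neg B b) = ker_rel f A `` {neg A (?rep (?fib b))}"
      using hom closed rb by (simp add: kernel_class hom_def subuniverse_def)
    show "?fib (jtwo B b) = ker_rel f A `` {jtwo A (?rep (?fib b))}"
      using hom closed rb by (simp add: kernel_class hom_def subuniverse_def)
  next
    show "?fib (zero_el B) = ker_rel f A `` {zero_el A}" "?fib (one_el B) = ker_rel f A `` {one_el A}"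
      using hom closed by (simp_all add: kernel_class hom_def subuniverse_def)
  qed
  moreover have "inj_on ?fib (car B)"
  proof (rule inj_onI)
    fix b c assume b: "b \<in> car B" and fib_eq: "?fib b = ?fib c"
    have "?rep (?fib b) \<in> ?fib b \<inter> ?fib c" using rep[OF b] unfolding fib_eq by simp
    then show "b = c" by auto
  qed
  ultimately show ?thesis
    unfolding iso_def bij_betw_def by (simp add: classes quot_alg_def)
qed

lemma
  fixes x y z :: wk
  shows wk_meet_comm: "wk_meet x y = wk_meet y x"
    and wk_join_comm: "wk_join x y = wk_join y x"
    and wk_meet_assoc: "wk_meet (wk_meet x y) z = wk_meet x (wk_meet y z)"
    and wk_join_assoc: "wk_join (wk_join x y) z = wk_join x (wk_join y z)"
    and wk_meet_join_distrib: "wk_meet x (wk_join y z) = wk_join (wk_meet x y) (wk_meet x z)"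
    and wk_join_W0: "wk_join x W0 = x"
    and wk_meet_W1: "wk_meet x W1 = x"
    and wk_meet_join_absorb: "wk_meet x (wk_join x y) = wk_join x (wk_meet y (wk_neg y))"
    and wk_join_meet_absorb: "wk_join x (wk_meet x y) = wk_join x (wk_meet y (wk_neg y))"
    and wk_join_neg: "wk_join x (wk_neg x) = wk_join W1 (wk_meet x (wk_neg x))"
    and wk_J2_J2: "wk_J2 (wk_J2 x) = wk_J2 x"
    and wk_join_meet_neg_J2: "wk_join (wk_meet x (wk_neg x)) (wk_J2 x) = x"
    and wk_J2_meet_neg: "wk_J2 (wk_meet x (wk_neg x)) = W0"
    and wk_meet_neg_J2: "wk_meet (wk_J2 x) (wk_neg (wk_J2 x)) = W0"
    and wk_meet_neg_meet: "wk_meet (wk_meet x y) (wk_neg (wk_meet x y))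
        = wk_join (wk_meet x (wk_neg x)) (wk_meet y (wk_neg y))"
    and wk_meet_neg_join: "wk_meet (wk_join x y) (wk_neg (wk_join x y))
        = wk_join (wk_meet x (wk_neg x)) (wk_meet y (wk_neg y))"
    and wk_meet_neg_neg: "wk_meet (wk_neg x) (wk_neg (wk_neg x)) = wk_meet x (wk_neg x)"
  by (cases x; cases y; cases z; simp add: wk_meet_def wk_join_def)+

(* In every coordinate of a power of WK^e, a \<and> \<not>a is 1/2 where a is 1/2 and 0 elsewhere:
   it projects A onto D(A). *)
definition dproj :: "'a alg \<Rightarrow> 'a \<Rightarrow> 'a" where
  "dproj A a = meet A a (neg A a)"

locale hsp_presentation =
  fixes A :: "'a alg" and S :: "('i \<Rightarrow> wk) set" and h :: "('i \<Rightarrow> wk) \<Rightarrow> 'a"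
  assumes subuniverse_S: "subuniverse S wk_power"
    and hom_h: "hom h (subalg S wk_power) A"
    and h_onto: "h ` S = car A"
begin

lemma A_in_VBCA: "in_VBCA TYPE('i) A"
  unfolding in_VBCA_def using subuniverse_S hom_h h_onto by blast

lemma S_closed:
  "f \<in> S \<Longrightarrow> g \<in> S \<Longrightarrow> (\<lambda>i. wk_meet (f i) (g i)) \<in> S"
  "f \<in> S \<Longrightarrow> g \<in> S \<Longrightarrow> (\<lambda>i. wk_join (f i) (g i)) \<in> S"
  "f \<in> S \<Longrightarrow> (\<lambda>i. wk_neg (f i)) \<in> S"
  "f \<in> S \<Longrightarrow> (\<lambda>i. wk_J2 (f i)) \<in> S"
  "(\<lambda>i. W0) \<in> S"
  "(\<lambda>i. W1) \<in> S"
  using subuniverse_S unfolding subuniverse_def wk_power_def by auto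

lemma h_ops:
  "f \<in> S \<Longrightarrow> g \<in> S \<Longrightarrow> meet A (h f) (h g) = h (\<lambda>i. wk_meet (f i) (g i))"
  "f \<in> S \<Longrightarrow> g \<in> S \<Longrightarrow> join A (h f) (h g) = h (\<lambda>i. wk_join (f i) (g i))"
  "f \<in> S \<Longrightarrow> neg A (h f) = h (\<lambda>i. wk_neg (f i))"
  "f \<in> S \<Longrightarrow> jtwo A (h f) = h (\<lambda>i. wk_J2 (f i))"
  "zero_el A = h (\<lambda>i. W0)"
  "one_el A = h (\<lambda>i. W1)"
  using hom_h unfolding hom_def subalg_def wk_power_def by auto

lemma preimageE:
  assumes "a \<in> car A"
  obtains f where "f \<in> S" "a = h f"
  using assms h_onto by blast

lemmas lift_simps = h_ops S_closed dproj_def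

lemma
  shows meet_closed: "a \<in> car A \<Longrightarrow> b \<in> car A \<Longrightarrow> meet A a b \<in> car A"
    and join_closed: "a \<in> car A \<Longrightarrow> b \<in> car A \<Longrightarrow> join A a b \<in> car A"
    and neg_closed: "a \<in> car A \<Longrightarrow> neg A a \<in> car A"
    and jtwo_closed: "a \<in> car A \<Longrightarrow> jtwo A a \<in> car A"
    and zero_closed: "zero_el A \<in> car A"
    and one_closed: "one_el A \<in> car A"
  by (auto elim!: preimageE simp: lift_simps h_onto[symmetric])

lemma car_subuniverse: "subuniverse (car A) A"
  by (simp add: subuniverse_def meet_closed join_closed neg_closed jtwo_closed zero_closed one_closed)

lemma meet_comm: "a \<in> car A \<Longrightarrow> b \<in> car A \<Longrightarrow> meet A a b = meet A b a"
  by (elim preimageE) (simp add: lift_simps wk_meet_comm)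

lemma join_comm: "a \<in> car A \<Longrightarrow> b \<in> car A \<Longrightarrow> join A a b = join A b a"
  by (elim preimageE) (simp add: lift_simps wk_join_comm)

lemma meet_assoc:
  "a \<in> car A \<Longrightarrow> b \<in> car A \<Longrightarrow> c \<in> car A \<Longrightarrow> meet A (meet A a b) c = meet A a (meet A b c)"
  by (elim preimageE) (simp add: lift_simps wk_meet_assoc)

lemma join_assoc:
  "a \<in> car A \<Longrightarrow> b \<in> car A \<Longrightarrow> c \<in> car A \<Longrightarrow> join A (join A a b) c = join A a (join A b c)"
  by (elim preimageE) (simp add: lift_simps wk_join_assoc)

lemma meet_join_distrib:
  "a \<in> car A \<Longrightarrow> b \<in> car A \<Longrightarrow> c \<in> car A \<Longrightarrow>
    meet A a (join A b c) = join A (meet A a b) (meet A a c)"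
  by (elim preimageE) (simp add: lift_simps wk_meet_join_distrib)

lemma join_zero: "a \<in> car A \<Longrightarrow> join A a (zero_el A) = a"
  by (elim preimageE) (simp add: lift_simps wk_join_W0)

lemma meet_one: "a \<in> car A \<Longrightarrow> meet A a (one_el A) = a"
  by (elim preimageE) (simp add: lift_simps wk_meet_W1)

lemma meet_join_absorb:
  "a \<in> car A \<Longrightarrow> b \<in> car A \<Longrightarrow> meet A a (join A a b) = join A a (dproj A b)"
  by (elim preimageE) (simp add: lift_simps wk_meet_join_absorb)

lemma join_meet_absorb:
  "a \<in> car A \<Longrightarrow> b \<in> car A \<Longrightarrow> join A a (meet A a b) = join A a (dproj A b)"
  by (elim preimageE) (simp add: lift_simps wk_join_meet_absorb)

lemma join_neg: "a \<in> car A \<Longrightarrow> join A a (neg A a) = join A (one_el A) (dproj A a)"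
  by (elim preimageE) (simp add: lift_simps wk_join_neg)

lemma jtwo_jtwo: "a \<in> car A \<Longrightarrow> jtwo A (jtwo A a) = jtwo A a"
  by (elim preimageE) (simp add: lift_simps wk_J2_J2)

lemma join_dproj_jtwo: "a \<in> car A \<Longrightarrow> join A (dproj A a) (jtwo A a) = a"
  by (elim preimageE) (simp add: lift_simps wk_join_meet_neg_J2)

lemma jtwo_dproj: "a \<in> car A \<Longrightarrow> jtwo A (dproj A a) = zero_el A"
  by (elim preimageE) (simp add: lift_simps wk_J2_meet_neg)

lemma dproj_jtwo: "a \<in> car A \<Longrightarrow> dproj A (jtwo A a) = zero_el A"
  by (elim preimageE) (simp add: lift_simps wk_meet_neg_J2)

lemma dproj_meet:
  "a \<in> car A \<Longrightarrow> b \<in> car A \<Longrightarrow> dproj A (meet A a b) = join A (dproj A a) (dproj A b)"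
  by (elim preimageE) (simp add: lift_simps wk_meet_neg_meet)

lemma dproj_join:
  "a \<in> car A \<Longrightarrow> b \<in> car A \<Longrightarrow> dproj A (join A a b) = join A (dproj A a) (dproj A b)"
  by (elim preimageE) (simp add: lift_simps wk_meet_neg_join)

lemma dproj_neg: "a \<in> car A \<Longrightarrow> dproj A (neg A a) = dproj A a"
  by (elim preimageE) (simp add: lift_simps wk_meet_neg_neg)

lemma jtwo_zero: "jtwo A (zero_el A) = zero_el A"
  by (simp add: lift_simps)

lemma dproj_zero: "dproj A (zero_el A) = zero_el A"
  by (simp add: lift_simps wk_meet_def)

lemma dproj_one: "dproj A (one_el A) = zero_el A"
  by (simp add: lift_simps wk_meet_def)

lemma dproj_closed: "a \<in> car A \<Longrightarrow> dproj A a \<in> car A"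
  unfolding dproj_def by (intro meet_closed neg_closed)

lemma Dset_eq_dproj_fixed: "Dset A = {a \<in> car A. dproj A a = a}"
proof (intro equalityI subsetI CollectI conjI)
  fix a assume "a \<in> Dset A"
  then have a: "a \<in> car A" and "jtwo A a = zero_el A" by (auto simp: Dset_def)
  then have "a = join A (dproj A a) (zero_el A)" using join_dproj_jtwo by metis
  with a show "a \<in> car A" "dproj A a = a" by (simp_all add: join_zero dproj_closed)
next
  fix a assume "a \<in> {a \<in> car A. dproj A a = a}"
  then show "a \<in> Dset A" using jtwo_dproj by (fastforce simp: Dset_def)
qed

lemma dproj_image: "dproj A ` car A = Dset A"
proof (intro equalityI subsetI)
  fix d assume "d \<in> dproj A ` car A"
  then show "d \<in> Dset A" using dproj_closed jtwo_dproj by (auto simp: Dset_def)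
next
  fix d assume "d \<in> Dset A"
  then have "d \<in> car A" "d = dproj A d" unfolding Dset_eq_dproj_fixed by simp_all
  then show "d \<in> dproj A ` car A" by (rule rev_image_eqI)
qed

lemma Oset_eq_dproj_zero: "Oset A = {a \<in> car A. dproj A a = zero_el A}"
proof (intro equalityI subsetI CollectI conjI)
  fix a assume "a \<in> Oset A"
  then have a: "a \<in> car A" and "jtwo A a = a" by (auto simp: Oset_def)
  then have "dproj A a = dproj A (jtwo A a)" by simp
  with a show "a \<in> car A" "dproj A a = zero_el A" by (simp_all add: dproj_jtwo)
next
  fix a assume "a \<in> {a \<in> car A. dproj A a = zero_el A}"
  then have a: "a \<in> car A" and "dproj A a = zero_el A" by simp_all
  then have "a = join A (zero_el A) (jtwo A a)" using join_dproj_jtwo by metis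
  also have "\<dots> = jtwo A a"
    using a by (simp add: join_comm[OF zero_closed] join_zero jtwo_closed)
  finally show "a \<in> Oset A" using a by (simp add: Oset_def)
qed

lemma Oset_iff_jtwo: "a \<in> car A \<Longrightarrow> a \<in> Oset A \<longleftrightarrow> (\<exists>b\<in>car A. a = jtwo A b)"
  unfolding Oset_def using jtwo_jtwo by (metis (mono_tags, lifting) mem_Collect_eq)

lemma dproj_hom: "hom (dproj A) A (D_alg A)"
  unfolding hom_def D_alg_def alg.simps
  using dproj_image
  by (auto simp: dproj_meet dproj_join dproj_neg dproj_jtwo jtwo_dproj dproj_zero dproj_one)

lemma zero_subuniverse_D_alg: "subuniverse {zero_el A} (D_alg A)"
  by (simp add: subuniverse_def D_alg_def Dset_def join_zero zero_closed jtwo_zero)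

lemma Oset_subuniverse: "subuniverse (Oset A) A"
  using subuniverse_vimage[OF dproj_hom car_subuniverse zero_subuniverse_D_alg]
  by (simp add: Oset_eq_dproj_zero)

lemma Oset_boolean_alg:
  "boolean_alg (Oset A) (meet A) (join A) (neg A) (zero_el A) (one_el A)"
proof -
  have regular: "x \<in> car A" "dproj A x = zero_el A" if "x \<in> Oset A" for x
    using that by (simp_all add: Oset_eq_dproj_zero)
  show ?thesis
    unfolding boolean_alg_def
  proof (intro conjI ballI)
    fix x y z assume x: "x \<in> Oset A" and y: "y \<in> Oset A" and z: "z \<in> Oset A"
    show "meet A (meet A x y) z = meet A x (meet A y z)"
      "join A (join A x y) z = join A x (join A y z)"
      "meet A x (join A y z) = join A (meet A x y) (meet A x z)"
      using regular x y z by (simp_all add: meet_assoc join_assoc meet_join_distrib)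
  next
    fix x y assume x: "x \<in> Oset A" and y: "y \<in> Oset A"
    show "meet A x y = meet A y x" "join A x y = join A y x"
      using regular x y by (simp_all add: meet_comm join_comm)
    show "meet A x (join A x y) = x" "join A x (meet A x y) = x"
      using regular x y by (simp_all add: meet_join_absorb join_meet_absorb join_zero)
    show "meet A x y \<in> Oset A" "join A x y \<in> Oset A"
      using Oset_subuniverse x y by (simp_all add: subuniverse_def)
  next
    fix x assume x: "x \<in> Oset A"
    show "join A x (zero_el A) = x" "meet A x (one_el A) = x"
      using regular x by (simp_all add: join_zero meet_one)
    show "meet A x (neg A x) = zero_el A" "join A x (neg A x) = one_el A"
      using regular x by (simp_all add: join_neg join_zero one_closed flip: dproj_def)
    show "neg A x \<in> Oset A"
      using Oset_subuniverse x by (simp add: subuniverse_def)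
  qed (use Oset_subuniverse in \<open>simp_all add: subuniverse_def\<close>)
qed

lemma Dset_subuniverse: "subuniverse (Dset A) (D_alg A)"
  using subuniverse_hom_image[OF dproj_hom car_subuniverse] by (simp add: dproj_image)

lemma D_alg_semilattice: "is_semilattice TYPE('i) (D_alg A)"
  unfolding is_semilattice_def
  using in_VBCA_hom_image[OF A_in_VBCA dproj_hom] dproj_image by (simp add: D_alg_def)

lemma D_alg_iso_quot_alg:
  "iso (\<lambda>d. {a \<in> car A. dproj A a = d}) (D_alg A) (quot_alg A (ker_rel (dproj A) A))"
  using iso_quot_alg_ker_rel[OF dproj_hom car_subuniverse] dproj_image by (simp add: D_alg_def)

end

theorem lemma4p12:
  fixes A :: "'a alg"
  assumes "in_VBCA TYPE('i) A"
  shows "(\<forall>a\<in>car A. a \<in> Oset A \<longleftrightarrow> (\<exists>b\<in>car A. a = jtwo A b))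
       \<and> (\<forall>a\<in>car A. a \<in> Dset A \<longleftrightarrow> (\<exists>b\<in>car A. a = meet A b (neg A b)))
       \<and> subuniverse (Oset A) A
       \<and> boolean_alg (Oset A) (meet A) (join A) (neg A) (zero_el A) (one_el A)
       \<and> zero_el A \<in> Dset A
       \<and> (\<forall>x\<in>Dset A. \<forall>y\<in>Dset A. join A x y \<in> Dset A)
       \<and> (\<forall>x\<in>Dset A. jtwo A x \<in> Dset A)
       \<and> is_semilattice TYPE('i) (D_alg A)
       \<and> (\<exists>\<theta> f. congruence \<theta> A \<and> iso f (D_alg A) (quot_alg A \<theta>))"
proof -
  obtain S :: "('i \<Rightarrow> wk) set" and h where "hsp_presentation A S h"
    using assms unfolding in_VBCA_def hsp_presentation_def by blast
  then interpret hsp_presentation A S h .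
  have "\<forall>a\<in>car A. a \<in> Dset A \<longleftrightarrow> (\<exists>b\<in>car A. a = meet A b (neg A b))"
    using dproj_image by (auto simp: dproj_def)
  moreover have "zero_el A \<in> Dset A" "\<forall>x\<in>Dset A. \<forall>y\<in>Dset A. join A x y \<in> Dset A"
    "\<forall>x\<in>Dset A. jtwo A x \<in> Dset A"
    using Dset_subuniverse by (simp_all add: subuniverse_def D_alg_def)
  moreover have "congruence (ker_rel (dproj A) A) A"
    using dproj_hom car_subuniverse by (rule congruence_ker_rel)
  ultimately show ?thesis
    using Oset_iff_jtwo Oset_subuniverse Oset_boolean_alg D_alg_semilattice D_alg_iso_quot_alg
    by blast
qed

end
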